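(* Let $\mu,\sigma$ be nonzero constants, let $K$ be an open interval not containing $0$, and let $W$ be a smooth function on $K$ such that $R(z):=(zW(z))'$ satisfies $R(z)\neq0$ for all $z\in K$. Then $R$ satisfies $$-\sigma zRR'''+\sigma zR'R''-2\sigma RR''-9\mu R^2R'-zR'+2R=0$$ on $K$ if and only if there is a constant $c_1$ such that $W$ satisfies the third-order equation $$\sigma W'''=-3\sigma\frac{W''}{z}-9\mu (W')^2-9\mu\frac{WW'}{z}+c_1\frac{W'}{z^2}+c_1\frac{W}{z^3}+\frac1z$$ on $K$. *)

theory Defs
  imports "HOL-Analysis.Analysis"
begin

definition smooth_on :: "real set \<Rightarrow> (real \<Rightarrow> real) \<Rightarrow> bool" where
  "smooth_on K f \<longleftrightarrow> (\<forall>n. \<forall>x\<in>K. ((deriv ^^ n) f) differentiable (at x))"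

end

theory Submission
  imports Defs
begin

text \<open>Writing \<open>R = W + z W'\<close>, the equation for \<open>W\<close> multiplied by \<open>z\<^sup>3\<close> says that
  \<open>F = (\<sigma> z\<^sup>3 W''' + 3 \<sigma> z\<^sup>2 W'' + 9 \<mu> z\<^sup>3 W'\<^sup>2 + 9 \<mu> z\<^sup>2 W W' - z\<^sup>2) / R\<close> equals \<open>c\<^sub>1\<close>.
  A direct computation gives \<open>F' = -z E / R\<^sup>2\<close>, where \<open>E\<close> is the left-hand side of the equation
  for \<open>R\<close>. Since \<open>K\<close> is an interval avoiding \<open>0\<close> on which \<open>R\<close> does not vanish, \<open>E\<close> vanishes on
  \<open>K\<close> iff \<open>F\<close> is constant there, i.e. \<open>F\<close> is a first integral of the equation for \<open>R\<close>.\<close>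

definition R_equation_lhs :: "real \<Rightarrow> real \<Rightarrow> (real \<Rightarrow> real) \<Rightarrow> real \<Rightarrow> real" where
  "R_equation_lhs \<sigma> \<mu> R z =
     - \<sigma> * z * R z * (deriv ^^ 3) R z + \<sigma> * z * deriv R z * (deriv ^^ 2) R z
     - 2 * \<sigma> * R z * (deriv ^^ 2) R z - 9 * \<mu> * (R z)^2 * deriv R z
     - z * deriv R z + 2 * R z"

definition first_integral :: "real \<Rightarrow> real \<Rightarrow> (real \<Rightarrow> real) \<Rightarrow> real \<Rightarrow> real" where
  "first_integral \<sigma> \<mu> W z =
     (\<sigma> * z^3 * (deriv ^^ 3) W z + 3 * \<sigma> * z^2 * (deriv ^^ 2) W z
      + 9 * \<mu> * z^3 * (deriv W z)^2 + 9 * \<mu> * z^2 * W z * deriv W z - z^2)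
     / (W z + z * deriv W z)"

lemma smooth_on_has_real_derivative:
  assumes "smooth_on K f" and "x \<in> K"
  shows "((deriv ^^ n) f has_real_derivative (deriv ^^ Suc n) f x) (at x)"
  using assms unfolding smooth_on_def
  by (simp add: DERIV_deriv_iff_real_differentiable)

lemma deriv_eq_on_open:
  fixes f g :: "real \<Rightarrow> real"
  assumes "open K" and "x \<in> K" and "\<And>y. y \<in> K \<Longrightarrow> f y = g y"
    and "(g has_real_derivative D) (at x)"
  shows "deriv f x = D"
proof -
  have "(f has_real_derivative D) (at x)"
    by (rule has_field_derivative_transform_within_open[OF assms(4,1,2)]) (use assms(3) in auto)
  then show ?thesis by (rule DERIV_imp_deriv)
qed

lemma higher_deriv_deriv_times_id:
  assumes "smooth_on K f" and "open K" and "x \<in> K"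
  shows "(deriv ^^ n) (deriv (\<lambda>z. z * f z)) x
           = real (Suc n) * (deriv ^^ n) f x + x * (deriv ^^ Suc n) f x"
  using assms(3)
proof (induction n arbitrary: x)
  case 0
  have "((\<lambda>z. z * f z) has_real_derivative 1 * f x + x * deriv f x) (at x)"
    using smooth_on_has_real_derivative[OF assms(1) 0, of 0]
    by (auto intro!: derivative_eq_intros)
  then show ?case by (simp add: DERIV_imp_deriv)
next
  case (Suc n)
  have "((\<lambda>y. real (Suc n) * (deriv ^^ n) f y + y * (deriv ^^ Suc n) f y)
          has_real_derivative real (Suc (Suc n)) * (deriv ^^ Suc n) f x
                                + x * (deriv ^^ Suc (Suc n)) f x) (at x)"
    using smooth_on_has_real_derivative[OF assms(1) Suc.prems, of n]
      smooth_on_has_real_derivative[OF assms(1) Suc.prems, of "Suc n"]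
    by (auto intro!: derivative_eq_intros simp: algebra_simps)
  then show ?case
    using deriv_eq_on_open[OF assms(2) Suc.prems Suc.IH] by simp
qed

lemma has_real_derivative_zero_iff_constant_on_interval:
  fixes F F' :: "real \<Rightarrow> real"
  assumes "open K" and "is_interval K"
    and F': "\<And>x. x \<in> K \<Longrightarrow> (F has_real_derivative F' x) (at x)"
  shows "(\<forall>x\<in>K. F' x = 0) \<longleftrightarrow> (\<exists>c. \<forall>x\<in>K. F x = c)"
proof
  assume "\<forall>x\<in>K. F' x = 0"
  then show "\<exists>c. \<forall>x\<in>K. F x = c"
    using F' is_interval_convex[OF assms(2)]
    by (metis has_field_derivative_at_within has_field_derivative_zero_constant)
next
  assume "\<exists>c. \<forall>x\<in>K. F x = c"
  then obtain c where c: "\<forall>x\<in>K. F x = c" by blast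
  show "\<forall>x\<in>K. F' x = 0"
  proof
    fix x assume "x \<in> K"
    have "(F has_real_derivative 0) (at x)"
      by (rule has_field_derivative_transform_within_open[OF _ assms(1) \<open>x \<in> K\<close>])
         (use c in auto)
    then show "F' x = 0" using F'[OF \<open>x \<in> K\<close>] DERIV_unique by blast
  qed
qed

lemma W_equation_iff_first_integral:
  assumes "0 \<notin> K" and "\<forall>z\<in>K. W z + z * deriv W z \<noteq> 0"
  shows "(\<forall>z\<in>K. \<sigma> * (deriv ^^ 3) W z =
            - 3 * \<sigma> * (deriv ^^ 2) W z / z - 9 * \<mu> * (deriv W z)^2
            - 9 * \<mu> * W z * deriv W z / z + c * deriv W z / z^2
            + c * W z / z^3 + 1 / z)
         \<longleftrightarrow> (\<forall>z\<in>K. first_integral \<sigma> \<mu> W z = c)"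
proof (rule ball_cong[OF refl])
  fix z assume "z \<in> K"
  then have "z \<noteq> 0" and "W z + z * deriv W z \<noteq> 0"
    using assms by auto
  then show "\<sigma> * (deriv ^^ 3) W z =
               - 3 * \<sigma> * (deriv ^^ 2) W z / z - 9 * \<mu> * (deriv W z)^2
               - 9 * \<mu> * W z * deriv W z / z + c * deriv W z / z^2
               + c * W z / z^3 + 1 / z
             \<longleftrightarrow> first_integral \<sigma> \<mu> W z = c"
    unfolding first_integral_def by (simp add: field_simps power2_eq_square power3_eq_cube)
qed

lemma has_real_derivative_first_integral:
  assumes "smooth_on K W" and "open K" and "x \<in> K"
    and R: "R = deriv (\<lambda>z. z * W z)" and "R x \<noteq> 0"
  shows "(first_integral \<sigma> \<mu> W has_real_derivative
            - x * R_equation_lhs \<sigma> \<mu> R x / (R x)^2) (at x)"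
proof -
  define w where "w n = (deriv ^^ n) W x" for n
  have W': "((deriv ^^ n) W has_real_derivative w (Suc n)) (at x)" for n
    unfolding w_def by (rule smooth_on_has_real_derivative[OF assms(1,3)])
  have R_w: "(deriv ^^ n) R x = real (Suc n) * w n + x * w (Suc n)" for n
    unfolding R w_def by (rule higher_deriv_deriv_times_id[OF assms(1-3)])
  define N where "N = \<sigma> * x^3 * w 3 + 3 * \<sigma> * x^2 * w 2 + 9 * \<mu> * x^3 * (w 1)^2
                      + 9 * \<mu> * x^2 * w 0 * w 1 - x^2"
  define N' where "N' = \<sigma> * (3 * x^2 * w 3 + x^3 * w 4) + 3 * \<sigma> * (2 * x * w 2 + x^2 * w 3)
                      + 9 * \<mu> * (3 * x^2 * (w 1)^2 + x^3 * 2 * w 1 * w 2)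
                      + 9 * \<mu> * (2 * x * w 0 * w 1 + x^2 * ((w 1)^2 + w 0 * w 2)) - 2 * x"
  have "(first_integral \<sigma> \<mu> W has_real_derivative (N' * R x - N * deriv R x) / (R x)^2) (at x)"
    unfolding first_integral_def[abs_def]
    using W'[of 0] W'[of 1] W'[of 2] W'[of 3] R_w[of 0] R_w[of 1] \<open>R x \<noteq> 0\<close>
    by (auto intro!: derivative_eq_intros simp: N_def N'_def w_def eval_nat_numeral)
       (simp add: algebra_simps power2_eq_square)
  moreover have "N' * R x - N * deriv R x = - x * R_equation_lhs \<sigma> \<mu> R x"
    unfolding R_equation_lhs_def R_w[of 0, simplified] R_w[of 1, simplified]
      R_w[of 2] R_w[of 3] N_def N'_def
    by (simp add: algebra_simps power2_eq_square power3_eq_cube eval_nat_numeral)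
  ultimately show ?thesis by simp
qed

theorem mainTheorem6:
  fixes \<mu> \<sigma> :: real and K :: "real set" and W R :: "real \<Rightarrow> real"
  assumes "\<mu> \<noteq> 0" and "\<sigma> \<noteq> 0"
    and "open K" and "is_interval K" and "K \<noteq> {}" and "0 \<notin> K"
    and "smooth_on K W"
    and "R = deriv (\<lambda>z. z * W z)"
    and "\<forall>z\<in>K. R z \<noteq> 0"
  shows "(\<forall>z\<in>K.
            - \<sigma> * z * R z * (deriv ^^ 3) R z + \<sigma> * z * deriv R z * (deriv ^^ 2) R z
            - 2 * \<sigma> * R z * (deriv ^^ 2) R z - 9 * \<mu> * (R z)^2 * deriv R z
            - z * deriv R z + 2 * R z = 0)
     \<longleftrightarrow>
     (\<exists>c1::real. \<forall>z\<in>K.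
            \<sigma> * (deriv ^^ 3) W z =
              - 3 * \<sigma> * (deriv ^^ 2) W z / z - 9 * \<mu> * (deriv W z)^2
              - 9 * \<mu> * W z * deriv W z / z + c1 * deriv W z / z^2
              + c1 * W z / z^3 + 1 / z)"
proof -
  have W_ne: "\<forall>z\<in>K. W z + z * deriv W z \<noteq> 0"
    using higher_deriv_deriv_times_id[OF \<open>smooth_on K W\<close> \<open>open K\<close>, of _ 0] assms(8,9) by simp
  have "(\<forall>z\<in>K. R_equation_lhs \<sigma> \<mu> R z = 0)
          \<longleftrightarrow> (\<forall>z\<in>K. - z * R_equation_lhs \<sigma> \<mu> R z / (R z)^2 = 0)"
    using \<open>0 \<notin> K\<close> assms(9) by fastforce
  also have "\<dots> \<longleftrightarrow> (\<exists>c. \<forall>z\<in>K. first_integral \<sigma> \<mu> W z = c)"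
    using has_real_derivative_zero_iff_constant_on_interval[OF \<open>open K\<close> \<open>is_interval K\<close>
        has_real_derivative_first_integral[OF \<open>smooth_on K W\<close> \<open>open K\<close> _ assms(8)]] assms(9)
    by blast
  finally show ?thesis
    unfolding R_equation_lhs_def W_equation_iff_first_integral[OF \<open>0 \<notin> K\<close> W_ne] .
qed

end
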